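(* Let $I$ be a real interval with $[0,1]\subseteq I\subseteq\mathbb{R}_+$, and let $f\colon I^n\to\mathbb{R}$ be a nonconstant quasi-Lovász extension, $f=L\circ\varphi$. Then the following are equivalent: (i) $f_0$ is weakly homogeneous; (ii) there exists $A\subseteq[n]$ with $f_0(\mathbf{1}_A)\neq0$; (iii) $\varphi(1)\neq 0$. Moreover, in this case $f_0(x\mathbf{1}_A)=\frac{\varphi(x)}{\varphi(1)}f_0(\mathbf{1}_A)$ for all $x\in I$ and all $A\subseteq[n]$.
   Context: Notation: $[n]=\{1,\ldots,n\}$; $\mathbf{1}_A$ is the indicator tuple of $A\subseteq[n]$, $\mathbf{0}=\mathbf{1}_\varnothing$; for a function $g$, $g_0=g-g(\mathbf{0})$. For $\sigma$ a permutation of $[n]$, $\mathbb{R}^n_\sigma=\{\mathbf{x}: x_{\sigma(1)}\leq\cdots\leq x_{\sigma(n)}\}$, $A^\uparrow_\sigma(i)=\{\sigma(i),\ldots,\sigma(n)\}$, $A^\uparrow_\sigma(n+1)=\varnothing$. The Lovász extension $L_\psi\colon\mathbb{R}^n\to\mathbb{R}$ of $\psi\colon\{0,1\}^n\to\mathbb{R}$ is the function whose restriction to each $\mathbb{R}^n_\sigma$ is the unique affine function agreeing with $\psi$ at the points $\mathbf{1}_{A^\uparrow_\sigma(k)}$, $k\in[n+1]$; a Lovász extension is any such $L_\psi$. A quasi-Lovász extension is a function $f\colon I^n\to\mathbb{R}$ with $f(\mathbf{x})=L(\varphi(x_1),\ldots,\varphi(x_n))$, where $L$ is a Lovász extension and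 $\varphi\colon I\to\mathbb{R}$ is nondecreasing with $\varphi(0)=0$. A function $g\colon I^n\to\mathbb{R}$ with $I\subseteq\mathbb{R}_+$ is weakly homogeneous if there exists a nondecreasing $\phi\colon I\to\mathbb{R}$ with $\phi(0)=0$ such that $g(x\mathbf{1}_A)=\phi(x)g(\mathbf{1}_A)$ for all $x\in I$, $A\subseteq[n]$. *)

theory Defs
  imports "HOL-Analysis.Analysis"
begin

text \<open>Vectors in R^n are represented as functions nat => real; only the
coordinates 1..n are relevant. Subsets of [n] represent points of {0,1}^n.\<close>

definition ind :: "nat set \<Rightarrow> (nat \<Rightarrow> real)" where
  "ind A = (\<lambda>i. if i \<in> A then 1 else 0)"

definition up_set :: "(nat \<Rightarrow> nat) \<Rightarrow> nat \<Rightarrow> nat \<Rightarrow> nat set" where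
  "up_set \<sigma> n i = \<sigma> ` {i..n}"

definition sorted_region :: "nat \<Rightarrow> (nat \<Rightarrow> nat) \<Rightarrow> (nat \<Rightarrow> real) set" where
  "sorted_region n \<sigma> = {x. \<forall>i j. 1 \<le> i \<and> i \<le> j \<and> j \<le> n \<longrightarrow> x (\<sigma> i) \<le> x (\<sigma> j)}"

definition is_Lovasz_ext_of :: "nat \<Rightarrow> (nat set \<Rightarrow> real) \<Rightarrow> ((nat \<Rightarrow> real) \<Rightarrow> real) \<Rightarrow> bool" where
  "is_Lovasz_ext_of n \<psi> L \<longleftrightarrow>
     (\<forall>\<sigma>. bij_betw \<sigma> {1..n} {1..n} \<longrightarrow>
        (\<exists>c (a :: nat \<Rightarrow> real).
           (\<forall>k \<in> {1..n+1}. c + (\<Sum>i=1..n. a i * ind (up_set \<sigma> n k) i) = \<psi> (up_set \<sigma> n k)) \<and>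
           (\<forall>x \<in> sorted_region n \<sigma>. L x = c + (\<Sum>i=1..n. a i * x i))))"

definition is_Lovasz_ext :: "nat \<Rightarrow> ((nat \<Rightarrow> real) \<Rightarrow> real) \<Rightarrow> bool" where
  "is_Lovasz_ext n L \<longleftrightarrow> (\<exists>\<psi>. is_Lovasz_ext_of n \<psi> L)"

definition cube :: "real set \<Rightarrow> nat \<Rightarrow> (nat \<Rightarrow> real) set" where
  "cube I n = {x. \<forall>i \<in> {1..n}. x i \<in> I}"

definition is_quasi_Lovasz_ext_via ::
  "real set \<Rightarrow> nat \<Rightarrow> ((nat \<Rightarrow> real) \<Rightarrow> real) \<Rightarrow> (real \<Rightarrow> real) \<Rightarrow> ((nat \<Rightarrow> real) \<Rightarrow> real) \<Rightarrow> bool" where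
  "is_quasi_Lovasz_ext_via I n L \<phi> f \<longleftrightarrow>
     is_Lovasz_ext n L \<and> mono_on I \<phi> \<and> \<phi> 0 = 0 \<and>
     (\<forall>x \<in> cube I n. f x = L (\<lambda>i. \<phi> (x i)))"

definition weakly_homogeneous :: "real set \<Rightarrow> nat \<Rightarrow> ((nat \<Rightarrow> real) \<Rightarrow> real) \<Rightarrow> bool" where
  "weakly_homogeneous I n g \<longleftrightarrow>
     (\<exists>\<phi>. mono_on I \<phi> \<and> \<phi> 0 = 0 \<and>
        (\<forall>x \<in> I. \<forall>A. A \<subseteq> {1..n} \<longrightarrow> g (\<lambda>i. x * ind A i) = \<phi> x * g (ind A)))"

end

theory Submission
  imports Defs
begin

(* A Lovasz extension L is affine on each region R^n_sigma, the regions
   cover R^n and contain 0, and each region is a cone.  Three consequences drive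
   everything:
     (a) L - L(0) is positively homogeneous:  L(t z) = L 0 + t (L z - L 0) for t >= 0;
     (b) L only depends on the coordinates 1..n;
     (c) if L takes the same value at every vertex 1_A, A a subset of [n], then L is
         constant (the affine coefficients on each region telescope to zero).
   For f = L o phi with phi nondecreasing, phi(0) = 0 and I in R_+, phi is nonnegative
   on I, hence by (a)   f0(x 1_A) = phi(x) (L(1_A) - L(0))   for all x in I.
   If f is nonconstant, (c) yields a vertex A0 with L(1_A0) /= L(0), and (b) yields a
   point of I where phi does not vanish.  With the displayed identity, the three
   conditions of the theorem and the explicit formula follow by short arguments:
   the witness of weak homogeneity is phi / phi(1). *)

text \<open>Every point lies in some region \<open>R^n_\<sigma>\<close>: sort the coordinates \<open>1..n\<close> by value.\<close>
lemma sorting_permutation_exists: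
  fixes z :: "nat \<Rightarrow> real"
  shows "\<exists>\<sigma>. bij_betw \<sigma> {1..n} {1..n} \<and> z \<in> sorted_region n \<sigma>"
proof -
  define xs where "xs = sort_key z [1..<Suc n]"
  have len: "length xs = n" and dist: "distinct xs" and set_xs: "set xs = {1..n}"
    and sorted_xs: "sorted (map z xs)" by (auto simp: xs_def)
  have shift: "bij_betw (\<lambda>i. i - 1) {1..n} {..<n}"
    by (rule bij_betw_byWitness[where f' = Suc]) auto
  have "bij_betw ((!) xs \<circ> (\<lambda>i. i - 1)) {1..n} {1..n}"
    using bij_betw_trans[OF shift bij_betw_nth[OF dist]] len set_xs by simp
  moreover have "z \<in> sorted_region n ((!) xs \<circ> (\<lambda>i. i - 1))"
    unfolding sorted_region_def
  proof (intro CollectI allI impI)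
    fix i j assume "1 \<le> i \<and> i \<le> j \<and> j \<le> n"
    then show "z (((!) xs \<circ> (\<lambda>i. i - 1)) i) \<le> z (((!) xs \<circ> (\<lambda>i. i - 1)) j)"
      using sorted_xs len unfolding sorted_iff_nth_mono by auto
  qed
  ultimately show ?thesis by blast
qed

lemma Lovasz_ext_affine_on_region:
  assumes "is_Lovasz_ext n L" "bij_betw \<sigma> {1..n} {1..n}"
  shows "\<exists>c a. \<forall>x\<in>sorted_region n \<sigma>. L x = c + (\<Sum>i=1..n. a i * x i)"
  using assms unfolding is_Lovasz_ext_def is_Lovasz_ext_of_def by blast

lemma sorted_region_scale:
  assumes "z \<in> sorted_region n \<sigma>" "(t::real) \<ge> 0"
  shows "(\<lambda>i. t * z i) \<in> sorted_region n \<sigma>"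
  using assms by (auto simp: sorted_region_def intro: mult_left_mono)

lemma zero_in_sorted_region: "(\<lambda>i. 0) \<in> sorted_region n \<sigma>"
  by (simp add: sorted_region_def)

lemma Lovasz_ext_pos_homogeneous:
  assumes "is_Lovasz_ext n L" "(t::real) \<ge> 0"
  shows "L (\<lambda>i. t * z i) = L (\<lambda>i. 0) + t * (L z - L (\<lambda>i. 0))"
proof -
  obtain \<sigma> where "bij_betw \<sigma> {1..n} {1..n}" and z: "z \<in> sorted_region n \<sigma>"
    using sorting_permutation_exists by blast
  then obtain c a where affine: "\<forall>x\<in>sorted_region n \<sigma>. L x = c + (\<Sum>i=1..n. a i * x i)"
    using Lovasz_ext_affine_on_region[OF assms(1)] by blast
  have "L (\<lambda>i. t * z i) = c + t * (\<Sum>i=1..n. a i * z i)"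
    using affine sorted_region_scale[OF z assms(2)] by (simp add: sum_distrib_left algebra_simps)
  then show ?thesis using affine z zero_in_sorted_region by simp
qed

lemma Lovasz_ext_local:
  assumes "is_Lovasz_ext n L" "\<forall>i\<in>{1..n}. z i = w i"
  shows "L z = L w"
proof -
  obtain \<sigma> where "bij_betw \<sigma> {1..n} {1..n}" and z: "z \<in> sorted_region n \<sigma>"
    using sorting_permutation_exists by blast
  moreover from this have w: "w \<in> sorted_region n \<sigma>"
    unfolding sorted_region_def
  proof (intro CollectI allI impI)
    fix i j assume ij: "1 \<le> i \<and> i \<le> j \<and> j \<le> n"
    have "\<sigma> i \<in> {1..n}" "\<sigma> j \<in> {1..n}"
      using ij bij_betwE[OF \<open>bij_betw \<sigma> {1..n} {1..n}\<close>] by auto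
    then show "w (\<sigma> i) \<le> w (\<sigma> j)"
      using z ij assms(2) unfolding sorted_region_def by force
  qed
  ultimately obtain c a where "\<forall>x\<in>sorted_region n \<sigma>. L x = c + (\<Sum>i=1..n. a i * x i)"
    using Lovasz_ext_affine_on_region[OF assms(1)] by blast
  then show ?thesis using z w assms(2) by simp
qed

lemma ind_up_set_at:
  assumes "inj_on \<sigma> {1..n}" "k \<in> {1..n+1}" "j \<in> {1..n}"
  shows "ind (up_set \<sigma> n k) (\<sigma> j) = (if k \<le> j then 1 else 0)"
proof -
  have "\<sigma> j \<in> \<sigma> ` {k..n} \<longleftrightarrow> j \<in> {k..n}"
    using assms by (intro inj_on_image_mem_iff[where B = "{1..n}"]) auto
  then show ?thesis using assms(3) by (simp add: ind_def up_set_def)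
qed

lemma ind_up_set_sorted:
  assumes "inj_on \<sigma> {1..n}" "k \<in> {1..n+1}"
  shows "ind (up_set \<sigma> n k) \<in> sorted_region n \<sigma>"
  using assms unfolding sorted_region_def by (auto simp: ind_up_set_at)

text \<open>(c) A Lovasz extension that is constant on the vertices \<open>1_A\<close> is constant:
  on a region, the vertices \<open>up_set \<sigma> n k\<close> force all tail sums of the coefficients
  \<open>a (\<sigma> j)\<close> to vanish, hence all coefficients vanish.\<close>
lemma Lovasz_ext_const_from_vertices:
  assumes "is_Lovasz_ext n L" "\<forall>A. A \<subseteq> {1..n} \<longrightarrow> L (ind A) = L (\<lambda>i. 0)"
  shows "L z = L (\<lambda>i. 0)"
proof -
  obtain \<sigma> where bij: "bij_betw \<sigma> {1..n} {1..n}" and z: "z \<in> sorted_region n \<sigma>"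
    using sorting_permutation_exists by blast
  then obtain c a where affine: "\<forall>x\<in>sorted_region n \<sigma>. L x = c + (\<Sum>i=1..n. a i * x i)"
    using Lovasz_ext_affine_on_region[OF assms(1)] by blast
  have inj: "inj_on \<sigma> {1..n}" and img: "\<sigma> ` {1..n} = {1..n}"
    using bij by (auto simp: bij_betw_def)
  have L0: "L (\<lambda>i. 0) = c" using affine zero_in_sorted_region by simp
  have reindex: "(\<Sum>i=1..n. g i) = (\<Sum>j=1..n. g (\<sigma> j))" for g :: "nat \<Rightarrow> real"
    using sum.reindex[OF inj, of g] img by simp
  have tail_zero: "(\<Sum>j=k..n. a (\<sigma> j)) = 0" if k: "k \<in> {1..n+1}" for k
  proof -
    have "up_set \<sigma> n k \<subseteq> {1..n}" using img k by (auto simp: up_set_def)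
    then have "0 = (\<Sum>i=1..n. a i * ind (up_set \<sigma> n k) i)"
      using affine ind_up_set_sorted[OF inj k] assms(2) L0 by force
    also have "\<dots> = (\<Sum>j=1..n. if k \<le> j then a (\<sigma> j) else 0)"
      by (subst reindex) (auto intro: sum.cong simp: ind_up_set_at[OF inj k])
    also have "\<dots> = (\<Sum>j\<in>{1..n} \<inter> {j. k \<le> j}. a (\<sigma> j))"
      by (simp add: sum.inter_restrict)
    also have "{1..n} \<inter> {j. k \<le> j} = {k..n}"
      using k by auto
    finally show ?thesis by simp
  qed
  have coeff_zero: "a (\<sigma> j) = 0" if "j \<in> {1..n}" for j
    using tail_zero[of j] tail_zero[of "Suc j"] that by (simp add: sum.atLeast_Suc_atMost)
  have "L z = c + (\<Sum>j=1..n. a (\<sigma> j) * z (\<sigma> j))"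
    using affine z reindex[of "\<lambda>i. a i * z i"] by simp
  then show ?thesis using coeff_zero L0 by simp
qed

lemma mono_zero_nonneg:
  assumes "mono_on I \<phi>" "\<phi> 0 = (0::real)" "0 \<in> I" "I \<subseteq> {0..}" "x \<in> I"
  shows "\<phi> x \<ge> 0"
  using monotone_onD[OF assms(1,3,5)] assms(2,4,5) by auto

text \<open>The key identity: along the ray through a vertex, \<open>f\<^sub>0\<close> is \<open>\<phi>\<close> times
  the increment of \<open>L\<close> at that vertex (by positive homogeneity of \<open>L - L 0\<close>).\<close>
lemma quasi_Lovasz_on_vertex_ray:
  assumes qL: "is_quasi_Lovasz_ext_via I n L \<phi> f" and "0 \<in> I" "I \<subseteq> {0..}" and x: "x \<in> I"
  shows "f (\<lambda>i. x * ind A i) - f (ind {}) = \<phi> x * (L (ind A) - L (\<lambda>i. 0))"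
proof -
  have LE: "is_Lovasz_ext n L" and mono: "mono_on I \<phi>" and \<phi>0: "\<phi> 0 = 0"
    and f_eq: "\<forall>x \<in> cube I n. f x = L (\<lambda>i. \<phi> (x i))"
    using qL unfolding is_quasi_Lovasz_ext_via_def by auto
  have ray_in_cube: "(\<lambda>i. y * ind A i) \<in> cube I n" if "y \<in> I" for y A
    using that \<open>0 \<in> I\<close> by (auto simp: cube_def ind_def)
  have f_ray: "f (\<lambda>i. y * ind A i) = L (\<lambda>i. \<phi> y * ind A i)" if "y \<in> I" for y A
  proof -
    have "(\<lambda>i. \<phi> (y * ind A i)) = (\<lambda>i. \<phi> y * ind A i)" by (auto simp: ind_def \<phi>0)
    then show ?thesis using f_eq ray_in_cube[OF that] by simp
  qed
  have "f (ind {}) = L (\<lambda>i. 0)"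
    using f_ray[OF \<open>0 \<in> I\<close>, of "{}"] by (simp add: ind_def \<phi>0)
  moreover have "f (\<lambda>i. x * ind A i) = L (\<lambda>i. 0) + \<phi> x * (L (ind A) - L (\<lambda>i. 0))"
    using f_ray[OF x] Lovasz_ext_pos_homogeneous[OF LE mono_zero_nonneg[OF mono \<phi>0 assms(2-3) x]]
    by simp
  ultimately show ?thesis by simp
qed

lemma quasi_Lovasz_nonconstant_vertex:
  assumes "is_quasi_Lovasz_ext_via I n L \<phi> f"
    and "\<exists>x \<in> cube I n. \<exists>y \<in> cube I n. f x \<noteq> f y"
  shows "\<exists>A. A \<subseteq> {1..n} \<and> L (ind A) \<noteq> L (\<lambda>i. 0)"
proof (rule ccontr)
  assume "\<not> ?thesis"
  then have "L z = L (\<lambda>i. 0)" for z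
    using assms(1) Lovasz_ext_const_from_vertices unfolding is_quasi_Lovasz_ext_via_def by blast
  then show False using assms unfolding is_quasi_Lovasz_ext_via_def by metis
qed

lemma quasi_Lovasz_nonconstant_phi:
  assumes qL: "is_quasi_Lovasz_ext_via I n L \<phi> f"
    and "\<exists>x \<in> cube I n. \<exists>y \<in> cube I n. f x \<noteq> f y"
  shows "\<exists>x \<in> I. \<phi> x \<noteq> 0"
proof (rule ccontr)
  assume "\<not> ?thesis"
  then have "f x = L (\<lambda>i. 0)" if "x \<in> cube I n" for x
    using qL that Lovasz_ext_local[of n L "\<lambda>i. \<phi> (x i)" "\<lambda>i. 0"]
    unfolding is_quasi_Lovasz_ext_via_def cube_def by auto
  then show False using assms(2) by metis
qed

theorem proposition3:
  fixes I :: "real set" and n :: nat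
    and f L :: "(nat \<Rightarrow> real) \<Rightarrow> real" and \<phi> :: "real \<Rightarrow> real"
  assumes "is_interval I" and "{0..1} \<subseteq> I" and "I \<subseteq> {0..}"
    and "is_quasi_Lovasz_ext_via I n L \<phi> f"
    and "\<exists>x \<in> cube I n. \<exists>y \<in> cube I n. f x \<noteq> f y"
  defines "f0 \<equiv> (\<lambda>x. f x - f (ind {}))"
  shows "(weakly_homogeneous I n f0 \<longleftrightarrow> (\<exists>A. A \<subseteq> {1..n} \<and> f0 (ind A) \<noteq> 0))
       \<and> ((\<exists>A. A \<subseteq> {1..n} \<and> f0 (ind A) \<noteq> 0) \<longleftrightarrow> \<phi> 1 \<noteq> 0)
       \<and> (\<phi> 1 \<noteq> 0 \<longrightarrow>
            (\<forall>x \<in> I. \<forall>A. A \<subseteq> {1..n} \<longrightarrow> f0 (\<lambda>i. x * ind A i) = \<phi> x / \<phi> 1 * f0 (ind A)))"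
proof -
  define D where "D A = L (ind A) - L (\<lambda>i. 0)" for A
  have I0: "0 \<in> I" and I1: "1 \<in> I" using assms(2) by auto
  have mono: "mono_on I \<phi>" and \<phi>0: "\<phi> 0 = 0"
    using assms(4) unfolding is_quasi_Lovasz_ext_via_def by auto
  have ray: "f0 (\<lambda>i. x * ind A i) = \<phi> x * D A" if "x \<in> I" for x A
    using quasi_Lovasz_on_vertex_ray[OF assms(4) I0 assms(3) that] by (simp add: f0_def D_def)
  have vertex: "f0 (ind A) = \<phi> 1 * D A" for A
    using ray[OF I1, of A] by simp
  obtain A0 where A0: "A0 \<subseteq> {1..n}" "D A0 \<noteq> 0"
    using quasi_Lovasz_nonconstant_vertex[OF assms(4,5)] by (auto simp: D_def)
  have ii_iii: "(\<exists>A. A \<subseteq> {1..n} \<and> f0 (ind A) \<noteq> 0) \<longleftrightarrow> \<phi> 1 \<noteq> 0"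
    using vertex A0 by auto
  have formula: "\<phi> 1 \<noteq> 0 \<longrightarrow>
      (\<forall>x \<in> I. \<forall>A. A \<subseteq> {1..n} \<longrightarrow> f0 (\<lambda>i. x * ind A i) = \<phi> x / \<phi> 1 * f0 (ind A))"
    using ray vertex by auto
  have ii_i: "weakly_homogeneous I n f0" if "\<phi> 1 \<noteq> 0"
  proof -
    have "\<phi> 1 > 0" using that mono_zero_nonneg[OF mono \<phi>0 I0 assms(3) I1] by simp
    then have "mono_on I (\<lambda>x. \<phi> x / \<phi> 1)"
      using mono by (auto intro!: monotone_onI divide_right_mono dest: monotone_onD)
    then show ?thesis
      unfolding weakly_homogeneous_def using formula that \<phi>0 by (intro exI[of _ "\<lambda>x. \<phi> x / \<phi> 1"]) simp
  qed
  have i_ii: "\<exists>A. A \<subseteq> {1..n} \<and> f0 (ind A) \<noteq> 0" if "weakly_homogeneous I n f0"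
  proof (rule ccontr)
    assume "\<not> ?thesis"
    then have "\<phi> x * D A0 = 0" if "x \<in> I" for x
      using \<open>weakly_homogeneous I n f0\<close> ray[OF that, of A0] that A0(1)
      unfolding weakly_homogeneous_def by fastforce
    then show False using quasi_Lovasz_nonconstant_phi[OF assms(4,5)] A0(2) by auto
  qed
  show ?thesis using i_ii ii_i ii_iii formula by blast
qed

end
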